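(* Let $\Omega=\{\omega_1,\dots,\omega_N\}$ be a finite set with probabilities $p_i\in(0,1]$, $\sum_{i=1}^N p_i=1$. Let $C\in\mathbb{R}^{d\times n}$, $A\in\mathbb{R}^{k\times n}$, $b\in\mathbb{R}^k$, and for each $i$ let $Q_i\in\mathbb{R}^{d\times m}$, $T_i\in\mathbb{R}^{\ell\times n}$, $W_i\in\mathbb{R}^{\ell\times m}$, $u^i\in\mathbb{R}^\ell$. Let $\mathcal{P}^{RP}:=\{Cx+\sum_{i=1}^Np_iQ_iy^i \mid Ax=b,\ T_ix+W_iy^i=u^i\ (i=1,\dots,N),\ x\ge0,\ y^1,\dots,y^N\ge0\}+\mathbb{R}^d_+$ be the upper image of the recourse problem, and with $\bar Q:=\sum_ip_iQ_i$, $\bar T:=\sum_ip_iT_i$, $\bar W:=\sum_ip_iW_i$, $\bar u:=\sum_ip_iu^i$ let $\mathcal{P}^{EV}:=\{Cx+\bar Qy\mid Ax=b,\ \bar Tx+\bar Wy=\bar u,\ x\ge0,\ y\ge0\}+\mathbb{R}^d_+$ be the upper image of the expected value problem. If $Q_1=\dots=Q_N$ and $W_1=\dots=W_N$, then $\mathcal{P}^{EV}\supseteq\mathcal{P}^{RP}$.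
   Context: Here $x\in\mathbb{R}^n$, $y,y^i\in\mathbb{R}^m$, inequalities on vectors are componentwise, and $+\mathbb{R}^d_+$ denotes Minkowski addition of the nonnegative orthant. *)

theory Defs
  imports "HOL-Analysis.Analysis"
begin

text \<open>Scenarios are indexed by a finite type 'i (the set Omega); dimensions d,n,k,l,m are
 the index types 'd,'n,'k,'l,'m. Matrices in R^(r x c) are values of type real^'c^'r.\<close>

definition upper_image_RP ::
  "real^'n^'d \<Rightarrow> real^'n^'k \<Rightarrow> real^'k \<Rightarrow> ('i::finite \<Rightarrow> real) \<Rightarrow>
   ('i \<Rightarrow> real^'m^'d) \<Rightarrow> ('i \<Rightarrow> real^'n^'l) \<Rightarrow> ('i \<Rightarrow> real^'m^'l) \<Rightarrow> ('i \<Rightarrow> real^'l)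
   \<Rightarrow> (real^'d) set" where
  "upper_image_RP C A b p Q T W u =
     {z + r | z r.
        (\<exists>x y. z = C *v x + (\<Sum>i\<in>UNIV. p i *\<^sub>R (Q i *v y i))
               \<and> A *v x = b
               \<and> (\<forall>i. T i *v x + W i *v y i = u i)
               \<and> (\<forall>j. 0 \<le> x $ j) \<and> (\<forall>i j. 0 \<le> y i $ j))
        \<and> (\<forall>j. 0 \<le> r $ j)}"

definition upper_image_EV ::
  "real^'n^'d \<Rightarrow> real^'n^'k \<Rightarrow> real^'k \<Rightarrow> ('i::finite \<Rightarrow> real) \<Rightarrow>
   ('i \<Rightarrow> real^'m^'d) \<Rightarrow> ('i \<Rightarrow> real^'n^'l) \<Rightarrow> ('i \<Rightarrow> real^'m^'l) \<Rightarrow> ('i \<Rightarrow> real^'l)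
   \<Rightarrow> (real^'d) set" where
  "upper_image_EV C A b p Q T W u =
     (let Qb = (\<Sum>i\<in>UNIV. p i *\<^sub>R Q i); Tb = (\<Sum>i\<in>UNIV. p i *\<^sub>R T i);
          Wb = (\<Sum>i\<in>UNIV. p i *\<^sub>R W i); ub = (\<Sum>i\<in>UNIV. p i *\<^sub>R u i) in
     {z + r | z r.
        (\<exists>x y. z = C *v x + Qb *v y
               \<and> A *v x = b
               \<and> Tb *v x + Wb *v y = ub
               \<and> (\<forall>j. 0 \<le> x $ j) \<and> (\<forall>j. 0 \<le> y $ j))
        \<and> (\<forall>j. 0 \<le> r $ j)})"

end

theory Submission
  imports Defs
begin

text \<open>When the recourse matrices Q and W do not depend on the scenario, averaging a
 scenario-wise feasible recourse y_1, ..., y_N with the weights p_i gives the nonnegative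
 vector sum_i p_i y_i, which satisfies the averaged constraint by linearity and attains the
 same objective value C x + Q (sum_i p_i y_i).\<close>

lemma sum_scaleR_matrix_vector_mult:
  fixes M :: "'i \<Rightarrow> real^'n^'l"
  assumes "finite S"
  shows "(\<Sum>i\<in>S. c i *\<^sub>R M i) *v x = (\<Sum>i\<in>S. c i *\<^sub>R (M i *v x))"
  using assms
  by (induction S rule: finite_induct)
     (auto simp: matrix_vector_mult_add_rdistrib scaleR_matrix_vector_assoc)

lemma matrix_vector_mult_sum_scaleR:
  fixes M :: "real^'m^'l"
  shows "M *v (\<Sum>i\<in>S. c i *\<^sub>R y i) = (\<Sum>i\<in>S. c i *\<^sub>R (M *v y i))"
  by (simp add: linear_sum[OF matrix_vector_mul_linear] matrix_scaleR_vector_ac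
      scaleR_matrix_vector_assoc)

lemma sum_scaleR_const:
  fixes M :: "'a::real_vector"
  assumes "(\<Sum>i\<in>S. p i) = 1"
  shows "(\<Sum>i\<in>S. p i *\<^sub>R M) = M"
  by (simp add: assms flip: scaleR_sum_left)

lemma sum_scaleR_component_nonneg:
  fixes y :: "'i \<Rightarrow> real^'m"
  assumes "\<forall>i. 0 \<le> p i" and "\<forall>i j. 0 \<le> y i $ j"
  shows "0 \<le> (\<Sum>i\<in>S. p i *\<^sub>R y i) $ j"
  using assms by (simp add: sum_nonneg)

lemma averaged_recourse_constraint:
  fixes T :: "'i::finite \<Rightarrow> real^'n^'l" and W :: "real^'m^'l"
  assumes "(\<Sum>i\<in>UNIV. p i) = 1" and "\<forall>i. T i *v x + W *v y i = u i"
  shows "(\<Sum>i\<in>UNIV. p i *\<^sub>R T i) *v x + (\<Sum>i\<in>UNIV. p i *\<^sub>R W) *v (\<Sum>i\<in>UNIV. p i *\<^sub>R y i)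
       = (\<Sum>i\<in>UNIV. p i *\<^sub>R u i)"
proof -
  have "(\<Sum>i\<in>UNIV. p i *\<^sub>R T i) *v x + (\<Sum>i\<in>UNIV. p i *\<^sub>R W) *v (\<Sum>i\<in>UNIV. p i *\<^sub>R y i)
      = (\<Sum>i\<in>UNIV. p i *\<^sub>R (T i *v x + W *v y i))"
    by (simp add: assms(1) sum_scaleR_const sum_scaleR_matrix_vector_mult
        matrix_vector_mult_sum_scaleR scaleR_add_right sum.distrib)
  with assms(2) show ?thesis
    by simp
qed

lemma upper_image_RP_subset_EV_fixed_recourse:
  fixes C :: "real^'n^'d" and A :: "real^'n^'k" and b :: "real^'k"
    and p :: "'i::finite \<Rightarrow> real" and Q :: "real^'m^'d" and W :: "real^'m^'l"
  assumes "\<forall>i. 0 \<le> p i" and "(\<Sum>i\<in>UNIV. p i) = 1"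
  shows "upper_image_RP C A b p (\<lambda>_. Q) T (\<lambda>_. W) u
           \<subseteq> upper_image_EV C A b p (\<lambda>_. Q) T (\<lambda>_. W) u"
proof
  fix v
  assume "v \<in> upper_image_RP C A b p (\<lambda>_. Q) T (\<lambda>_. W) u"
  then obtain x y r where v: "v = (C *v x + (\<Sum>i\<in>UNIV. p i *\<^sub>R (Q *v y i))) + r"
    and "A *v x = b" and feasible: "\<forall>i. T i *v x + W *v y i = u i"
    and "\<forall>j. 0 \<le> x $ j" and y_nonneg: "\<forall>i j. 0 \<le> y i $ j" and "\<forall>j. 0 \<le> r $ j"
    unfolding upper_image_RP_def by blast
  define y_avg where "y_avg = (\<Sum>i\<in>UNIV. p i *\<^sub>R y i)"
  have "v = (C *v x + (\<Sum>i\<in>UNIV. p i *\<^sub>R Q) *v y_avg) + r"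
    by (simp add: v y_avg_def assms(2) sum_scaleR_const matrix_vector_mult_sum_scaleR)
  moreover have "(\<Sum>i\<in>UNIV. p i *\<^sub>R T i) *v x + (\<Sum>i\<in>UNIV. p i *\<^sub>R W) *v y_avg
      = (\<Sum>i\<in>UNIV. p i *\<^sub>R u i)"
    unfolding y_avg_def using assms(2) feasible by (rule averaged_recourse_constraint)
  moreover have "\<forall>j. 0 \<le> y_avg $ j"
    unfolding y_avg_def using assms(1) y_nonneg by (blast intro: sum_scaleR_component_nonneg)
  ultimately show "v \<in> upper_image_EV C A b p (\<lambda>_. Q) T (\<lambda>_. W) u"
    unfolding upper_image_EV_def Let_def using \<open>A *v x = b\<close> \<open>\<forall>j. 0 \<le> x $ j\<close> \<open>\<forall>j. 0 \<le> r $ j\<close>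
    by blast
qed

theorem proposition6p1:
  fixes C :: "real^'n^'d" and A :: "real^'n^'k" and b :: "real^'k"
    and p :: "'i::finite \<Rightarrow> real"
    and Q :: "'i \<Rightarrow> real^'m^'d" and T :: "'i \<Rightarrow> real^'n^'l"
    and W :: "'i \<Rightarrow> real^'m^'l" and u :: "'i \<Rightarrow> real^'l"
  assumes "\<forall>i. 0 < p i \<and> p i \<le> 1"
    and "(\<Sum>i\<in>UNIV. p i) = 1"
    and "\<forall>i j. Q i = Q j"
    and "\<forall>i j. W i = W j"
  shows "upper_image_RP C A b p Q T W u \<subseteq> upper_image_EV C A b p Q T W u"
proof -
  have "Q = (\<lambda>_. Q undefined)" and "W = (\<lambda>_. W undefined)"
    using assms(3,4) by auto
  moreover have "\<forall>i. 0 \<le> p i"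
    using assms(1) by (simp add: less_imp_le)
  ultimately show ?thesis
    using upper_image_RP_subset_EV_fixed_recourse assms(2) by metis
qed

end
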